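(* Let $A=T_{\sigma_A}$ and $B=T_{\sigma_B}$ be global pseudo-differential operators on $SU_q(2)$ with symbols $\sigma_A,\sigma_B\in\Phi^0(SU_q(2))$. Then $A\circ B$ is a global pseudo-differential operator with symbol $\sigma_{A\circ B}(l)=\sigma_A(l)\sigma_B(l)$ for all $l\in\frac12\mathbb{N}$.
   Context: Fix $0<q<1$. $SU_q(2)$ is the $*$-algebra generated by $a,c$ with $ac^*=qc^*a$, $ca^*=qa^*c$, $c^*a^*=qa^*c^*$, $c^*c=cc^*$, $aa^*+q^2c^*c=a^*a+c^*c=1$, with Haar state $h$, inner product $\langle y,x\rangle=h(xy^* )$, and we also use this name for its completion. For $l\in\frac12\mathbb{N}$, $T^l=[t^l_{ij}]_{-l\le i,j\le l}$ is the irreducible unitary matrix corepresentation of dimension $2l+1$; $\{t^l_{ij}\}$ is an orthogonal basis with $h(t^l_{ij}(t^l_{ij})^* )=[2l+1]_q^{-1}q^{2j}$, where $[x]_q=\frac{q^x-q^{-x}}{q-q^{-1}}$. Fourier transform: $\hat f(l)_{mn}=h(f(t^l_{nm})^* )$. For a $(2l+1)\times(2l+1)$ matrix $M$, $Tr_q(M)=Tr(D_qM)$ with $D_q=\mathrm{diag}(q^{-2i})_{-l\le i\le l}$; Fourier inversion reads $f=\sum_l[2l+1]_qTr_q(\hat f(l)T^l)$. A symbol is a map $\sigma:\frac12\mathbb{N}\to\bigcup_lM_{2l+1}(\mathbb{C})\otimes SU_q(2)$ with $\sigma(l)$ of size $2l+1$; its operator is $T_\sigma f=\mathfrak F^{-1}(\sigma\mathfrak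 Ff)=\sum_l[2l+1]_qTr_q(\sigma(l)\hat f(l)T^l)$. For $l$ write $I_{2l+1}=\{-l,-l+1,\dots,l\}$. A symbol $\sigma$ is homogeneous of Fourier order $m\in\frac12\mathbb{N}$ if for every $l$ there is a map $\psi_\sigma(l):I_{2l+1}\times I_{2l+1}\to I_{2l+1}\times I_{2l+1}$ with $\sigma(l)_{ij}\in\mathrm{Span}\{t^m_{\psi_\sigma(l)(i,j)}\}$, and $\sigma(l)_{ij}=0$ whenever $\psi_\sigma(l)(i,j)\notin I_{2m+1}\times I_{2m+1}$. $\Phi^m(SU_q(2))$ is the set of finite linear combinations of homogeneous symbols of Fourier order $m$. (In particular symbols in $\Phi^0$ have complex scalar entries.) *)

theory Defs
  imports "HOL-Analysis.Analysis"
begin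

text \<open>Conventions.  A spin l in 1/2 N is encoded by n = 2l :: nat.  A row/column index
 i in I_{2l+1} = {-l,...,l} is encoded by the offset a = i + l in {0..n}; thus
 i = a - n/2 and 2i = hint n a.\<close>

definition hint :: "nat \<Rightarrow> nat \<Rightarrow> int" where
  "hint n a = 2 * int a - int n"

definition qnum :: "real \<Rightarrow> real \<Rightarrow> real" where
  "qnum q x = (q powr x - q powr (-x)) / (q - 1 / q)"

text \<open>Algebraic Peter--Weyl data of SU_q(2): a unital complex *-algebra (carrier type 'v,
 ring structure from ring_1, complex scalar multiplication sc, involution star), a linear
 Haar state h, and the matrix coefficients t n a b = t^l_{ij} (n = 2l, a = i+l, b = j+l) of the
 irreducible unitary corepresentations, which form an orthogonal basis with
 h(t^l_{ij} (t^{l'}_{i'j'})^*) = delta [2l+1]_q^{-1} q^{2j}, and T^0 = [1].\<close>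
definition SUq2_data ::
  "real \<Rightarrow> (complex \<Rightarrow> 'v::ring_1 \<Rightarrow> 'v) \<Rightarrow> ('v \<Rightarrow> 'v) \<Rightarrow> ('v \<Rightarrow> complex)
   \<Rightarrow> (nat \<Rightarrow> nat \<Rightarrow> nat \<Rightarrow> 'v) \<Rightarrow> bool" where
  "SUq2_data q sc star h t \<longleftrightarrow>
     0 < q \<and> q < 1 \<and>
     vector_space sc \<and>
     (\<forall>c x y. sc c (x * y) = sc c x * y \<and> sc c (x * y) = x * sc c y) \<and>
     (\<forall>x y. h (x + y) = h x + h y) \<and> (\<forall>c x. h (sc c x) = c * h x) \<and>
     (\<forall>c x. star (sc c x) = sc (cnj c) (star x)) \<and>
     (\<forall>x y. star (x + y) = star x + star y) \<and>
     (\<forall>x y. star (x * y) = star y * star x) \<and> (\<forall>x. star (star x) = x) \<and>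
     t 0 0 0 = 1 \<and>
     (\<forall>n a b n' a' b'. a \<le> n \<longrightarrow> b \<le> n \<longrightarrow> a' \<le> n' \<longrightarrow> b' \<le> n' \<longrightarrow>
        h (t n a b * star (t n' a' b')) =
          (if n = n' \<and> a = a' \<and> b = b'
           then complex_of_real (q powr (of_int (hint n b)) / qnum q (real n + 1))
           else 0)) \<and>
     (\<forall>f. f \<in> module.span sc {t n a b | n a b. a \<le> n \<and> b \<le> n})"

text \<open>Symbols: sigma n a b is the (a,b) entry (a,b \<le> n) of sigma(l), l = n/2.\<close>
type_synonym 'v symbol = "nat \<Rightarrow> nat \<Rightarrow> nat \<Rightarrow> 'v"

definition fhat :: "('v::ring_1 \<Rightarrow> 'v) \<Rightarrow> ('v \<Rightarrow> complex) \<Rightarrow> (nat \<Rightarrow> nat \<Rightarrow> nat \<Rightarrow> 'v)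
     \<Rightarrow> 'v \<Rightarrow> nat \<Rightarrow> nat \<Rightarrow> nat \<Rightarrow> complex" where
  "fhat star h t f n a b = h (f * star (t n b a))"

definition fsupp :: "('v::ring_1 \<Rightarrow> 'v) \<Rightarrow> ('v \<Rightarrow> complex) \<Rightarrow> (nat \<Rightarrow> nat \<Rightarrow> nat \<Rightarrow> 'v)
     \<Rightarrow> 'v \<Rightarrow> nat set" where
  "fsupp star h t f = {n. \<exists>a\<le>n. \<exists>b\<le>n. fhat star h t f n a b \<noteq> 0}"

text \<open>T_sigma f = sum_l [2l+1]_q Tr_q(sigma(l) fhat(l) T^l), Tr_q(M) = sum_i q^{-2i} M_ii.
 Only l with fhat(l) \<noteq> 0 contribute (finitely many, for f in SU_q(2)).\<close>
definition Top :: "real \<Rightarrow> (complex \<Rightarrow> 'v::ring_1 \<Rightarrow> 'v) \<Rightarrow> ('v \<Rightarrow> 'v) \<Rightarrow> ('v \<Rightarrow> complex)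
     \<Rightarrow> (nat \<Rightarrow> nat \<Rightarrow> nat \<Rightarrow> 'v) \<Rightarrow> 'v symbol \<Rightarrow> 'v \<Rightarrow> 'v" where
  "Top q sc star h t \<sigma> f =
     (\<Sum>n\<in>fsupp star h t f. sc (complex_of_real (qnum q (real n + 1)))
        (\<Sum>a\<le>n. \<Sum>j\<le>n. \<Sum>k\<le>n.
           sc (complex_of_real (q powr (- of_int (hint n a))) * fhat star h t f n j k)
              (\<sigma> n a j * t n k a)))"

definition sym_mult :: "'v::ring_1 symbol \<Rightarrow> 'v symbol \<Rightarrow> 'v symbol" where
  "sym_mult \<sigma> \<tau> n a b = (\<Sum>j\<le>n. \<sigma> n a j * \<tau> n j b)"

text \<open>Homogeneous symbol of Fourier order m (encoded M = 2m).\<close>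
definition homogeneous :: "(complex \<Rightarrow> 'v::ring_1 \<Rightarrow> 'v) \<Rightarrow> (nat \<Rightarrow> nat \<Rightarrow> nat \<Rightarrow> 'v)
     \<Rightarrow> nat \<Rightarrow> 'v symbol \<Rightarrow> bool" where
  "homogeneous sc t M \<sigma> \<longleftrightarrow>
    (\<forall>n. \<exists>\<psi> :: nat \<Rightarrow> nat \<Rightarrow> nat \<times> nat. \<forall>a\<le>n. \<forall>b\<le>n.
       fst (\<psi> a b) \<le> n \<and> snd (\<psi> a b) \<le> n \<and>
       (\<forall>a' b'. a' \<le> M \<longrightarrow> b' \<le> M \<longrightarrow> hint M a' = hint n (fst (\<psi> a b)) \<longrightarrow>
           hint M b' = hint n (snd (\<psi> a b)) \<longrightarrow> \<sigma> n a b \<in> module.span sc {t M a' b'}) \<and>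
       (\<not> (\<exists>a'\<le>M. \<exists>b'\<le>M. hint M a' = hint n (fst (\<psi> a b)) \<and> hint M b' = hint n (snd (\<psi> a b)))
           \<longrightarrow> \<sigma> n a b = 0))"

definition Phi :: "(complex \<Rightarrow> 'v::ring_1 \<Rightarrow> 'v) \<Rightarrow> (nat \<Rightarrow> nat \<Rightarrow> nat \<Rightarrow> 'v)
     \<Rightarrow> nat \<Rightarrow> 'v symbol set" where
  "Phi sc t M = {\<sigma>. \<exists>K (c :: nat \<Rightarrow> complex) s. (\<forall>k<K. homogeneous sc t M (s k)) \<and>
      (\<forall>n a b. a \<le> n \<longrightarrow> b \<le> n \<longrightarrow> \<sigma> n a b = (\<Sum>k<K. sc (c k) (s k n a b)))}"

end

theory Submission
  imports Defs
begin

(* Fourier inversion, f = sum_l [2l+1]_q Tr_q(fhat f (l) T^l), makes the Fourier transform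
   injective. A symbol in Phi^0 has scalar entries, and for such a symbol the transform of
   T_sigma f is the matrix product sigma(l) fhat f (l). Hence T_A (T_B f) and T_{AB} f have the
   same transform sigma_A(l) sigma_B(l) fhat f (l) by associativity of the matrix product,
   so they coincide. *)

lemma sym_mult_assoc:
  fixes \<sigma> \<tau> \<rho> :: "'a::ring_1 symbol"
  shows "sym_mult \<sigma> (sym_mult \<tau> \<rho>) = sym_mult (sym_mult \<sigma> \<tau>) \<rho>"
  unfolding sym_mult_def
  by (intro ext) (auto simp: sum_distrib_left sum_distrib_right mult.assoc intro: sum.swap)

locale SUq2 =
  fixes q :: real and sc :: "complex \<Rightarrow> 'v::ring_1 \<Rightarrow> 'v" and star :: "'v \<Rightarrow> 'v"
    and h :: "'v \<Rightarrow> complex" and t :: "nat \<Rightarrow> nat \<Rightarrow> nat \<Rightarrow> 'v"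
  assumes SUq2_data: "SUq2_data q sc star h t"
begin

sublocale vector_space sc
  using SUq2_data by (simp add: SUq2_data_def)

lemma q_pos: "0 < q" and q_less_one: "q < 1"
  and scale_mult_left: "sc c (x * y) = sc c x * y"
  and haar_add: "h (x + y) = h x + h y"
  and haar_scale: "h (sc c x) = c * h x"
  and t_zero: "t 0 0 0 = 1"
  and haar_orthogonality: "a \<le> n \<Longrightarrow> b \<le> n \<Longrightarrow> a' \<le> n' \<Longrightarrow> b' \<le> n' \<Longrightarrow>
        h (t n a b * star (t n' a' b')) =
          (if n = n' \<and> a = a' \<and> b = b'
           then complex_of_real (q powr (of_int (hint n b)) / qnum q (real n + 1)) else 0)"
  and in_span_coefficients: "f \<in> span {t n a b | n a b. a \<le> n \<and> b \<le> n}"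
  using SUq2_data unfolding SUq2_data_def by simp_all

lemma qnum_pos: "qnum q (real n + 1) > 0"
proof -
  have "q powr (real n + 1) < 1"
    using q_pos q_less_one powr_less_mono2[of "real n + 1" q 1] by simp
  moreover have "1 < q powr (- (real n + 1))"
    using q_pos q_less_one powr_less_mono2_neg[of "- (real n + 1)" q 1] by simp
  moreover have "q - 1 / q < 0"
    using q_pos q_less_one by (simp add: field_simps mult_strict_mono[of q 1 q 1, simplified])
  ultimately show ?thesis
    unfolding qnum_def by (simp add: divide_neg_neg)
qed

lemma haar_zero: "h 0 = 0"
  using haar_add[of 0 0] by simp

lemma haar_sum: "h (sum f A) = (\<Sum>x\<in>A. h (f x))"
  by (induct A rule: infinite_finite_induct) (simp_all add: haar_zero haar_add)

lemma scale_one_mult: "sc c 1 * y = sc c y"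
  using scale_mult_left[of c 1 y] by simp

lemma fhat_zero: "fhat star h t 0 = (\<lambda>n a b. 0)"
  unfolding fhat_def by (simp add: haar_zero)

lemma fhat_add: "fhat star h t (x + y) = (\<lambda>n a b. fhat star h t x n a b + fhat star h t y n a b)"
  unfolding fhat_def by (simp add: distrib_right haar_add)

lemma fhat_scale: "fhat star h t (sc c x) = (\<lambda>n a b. c * fhat star h t x n a b)"
  unfolding fhat_def by (simp add: scale_mult_left[symmetric] haar_scale)

definition inverse_fourier :: "nat set \<Rightarrow> complex symbol \<Rightarrow> 'v" where
  "inverse_fourier S M = (\<Sum>n\<in>S. sc (complex_of_real (qnum q (real n + 1)))
      (\<Sum>a\<le>n. \<Sum>k\<le>n. sc (complex_of_real (q powr (- of_int (hint n a))) * M n a k) (t n k a)))"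

lemma inverse_fourier_cong:
  assumes "\<And>n a k. n \<in> S \<Longrightarrow> a \<le> n \<Longrightarrow> k \<le> n \<Longrightarrow> M n a k = M' n a k"
  shows "inverse_fourier S M = inverse_fourier S M'"
  unfolding inverse_fourier_def using assms by (intro sum.cong refl) auto

lemma inverse_fourier_add:
  "inverse_fourier S (\<lambda>n a k. M n a k + M' n a k) = inverse_fourier S M + inverse_fourier S M'"
  unfolding inverse_fourier_def
  by (simp add: distrib_left scale_left_distrib sum.distrib scale_right_distrib)

lemma inverse_fourier_scale:
  "inverse_fourier S (\<lambda>n a k. c * M n a k) = sc c (inverse_fourier S M)"
  unfolding inverse_fourier_def
  by (simp add: scale_sum_right mult.left_commute)

lemma inverse_fourier_zero: "inverse_fourier S (\<lambda>n a k. 0) = 0"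
  unfolding inverse_fourier_def by simp

lemma haar_combination_star_t:
  assumes "x \<le> n" "y \<le> n"
  shows "(\<Sum>a\<le>m. \<Sum>k\<le>m. c a k * h (t m k a * star (t n y x))) =
    (if m = n then c x y * complex_of_real (q powr (of_int (hint n x)) / qnum q (real n + 1)) else 0)"
proof (cases "m = n")
  case True
  have "(\<Sum>a\<le>m. \<Sum>k\<le>m. c a k * h (t m k a * star (t n y x))) = (\<Sum>a\<le>n. \<Sum>k\<le>n.
      if k = y then if a = x then c x y * complex_of_real (q powr (of_int (hint n x)) / qnum q (real n + 1))
      else 0 else 0)"
    using True assms by (intro sum.cong refl) (auto simp: haar_orthogonality)
  then show ?thesis
    using True assms by simp
qed (use assms in \<open>simp add: haar_orthogonality\<close>)

lemma fhat_inverse_fourier: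
  assumes "finite S" "x \<le> n" "y \<le> n"
  shows "fhat star h t (inverse_fourier S M) n x y = (if n \<in> S then M n x y else 0)"
proof -
  let ?c = "\<lambda>m a k. complex_of_real (qnum q (real m + 1)) *
              (complex_of_real (q powr (- of_int (hint m a))) * M m a k)"
  have "fhat star h t (inverse_fourier S M) n x y =
      (\<Sum>m\<in>S. \<Sum>a\<le>m. \<Sum>k\<le>m. ?c m a k * h (t m k a * star (t n y x)))"
    unfolding fhat_def inverse_fourier_def
    by (simp add: sum_distrib_left sum_distrib_right haar_sum scale_mult_left[symmetric] haar_scale scale_scale
        mult.assoc)
  also have "\<dots> = (\<Sum>m\<in>S. if m = n then ?c m x y *
      complex_of_real (q powr (of_int (hint n x)) / qnum q (real n + 1)) else 0)"
    using assms(2,3) by (simp add: haar_combination_star_t)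
  also have "\<dots> = (if n \<in> S then M n x y else 0)"
    using assms(1) qnum_pos[of n] q_pos
    by (simp add: sum.delta powr_minus field_simps flip: of_real_mult)
  finally show ?thesis .
qed

lemma inverse_fourier_matrix_unit:
  assumes "finite S" "m \<in> S" "a0 \<le> m" "b0 \<le> m"
  shows "inverse_fourier S (\<lambda>n a k. if n = m \<and> a = a0 \<and> k = b0 then r else 0) =
    sc (complex_of_real (qnum q (real m + 1) * q powr (- of_int (hint m a0))) * r) (t m b0 a0)"
proof -
  let ?c = "\<lambda>n a. complex_of_real (q powr (- of_int (hint n a)))"
  have "(\<Sum>a\<le>m. \<Sum>k\<le>m. sc (?c m a * (if a = a0 \<and> k = b0 then r else 0)) (t m k a)) =
      (\<Sum>a\<le>m. \<Sum>k\<le>m. if k = b0 then if a = a0 then sc (?c m a * r) (t m k a) else 0 else 0)"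
    by (intro sum.cong refl) auto
  also have "\<dots> = sc (?c m a0 * r) (t m b0 a0)"
    using assms(3,4) by simp
  finally have "inverse_fourier S (\<lambda>n a k. if n = m \<and> a = a0 \<and> k = b0 then r else 0) =
      (\<Sum>n\<in>S. if n = m then sc (complex_of_real (qnum q (real m + 1))) (sc (?c m a0 * r) (t m b0 a0))
        else 0)"
    unfolding inverse_fourier_def by (intro sum.cong refl) auto
  then show ?thesis
    using assms(1,2) by (simp add: mult.assoc)
qed

lemma inverse_fourier_fhat_t:
  assumes "finite S" "m \<in> S" "a0 \<le> m" "b0 \<le> m"
  shows "inverse_fourier S (fhat star h t (t m a0 b0)) = t m a0 b0"
proof -
  define r where "r = complex_of_real (q powr (of_int (hint m b0)) / qnum q (real m + 1))"
  have "fhat star h t (t m a0 b0) n a k = (if n = m \<and> a = b0 \<and> k = a0 then r else 0)"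
    if "a \<le> n" "k \<le> n" for n a k
    using that assms(3,4) unfolding fhat_def r_def by (auto simp: haar_orthogonality)
  then have "inverse_fourier S (fhat star h t (t m a0 b0)) =
      inverse_fourier S (\<lambda>n a k. if n = m \<and> a = b0 \<and> k = a0 then r else 0)"
    by (intro inverse_fourier_cong) auto
  also have "\<dots> = sc (complex_of_real (qnum q (real m + 1) * q powr (- of_int (hint m b0))) * r)
      (t m a0 b0)"
    using assms(1,2,4,3) by (rule inverse_fourier_matrix_unit)
  also have "\<dots> = t m a0 b0"
    unfolding r_def using qnum_pos[of m] q_pos by (simp add: powr_minus field_simps flip: of_real_mult)
  finally show ?thesis .
qed

(* Quantifying over all finite S containing N makes the set of such f closed under sums. *)
lemma fourier_inversion:
  "\<exists>N. finite N \<and> (\<forall>S. finite S \<longrightarrow> N \<subseteq> S \<longrightarrow> inverse_fourier S (fhat star h t f) = f)"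
proof -
  define Q where "Q = {f. \<exists>N. finite N \<and>
    (\<forall>S. finite S \<longrightarrow> N \<subseteq> S \<longrightarrow> inverse_fourier S (fhat star h t f) = f)}"
  have "subspace Q"
  proof (rule subspaceI)
    show "0 \<in> Q"
      unfolding Q_def by (auto simp: fhat_zero inverse_fourier_zero)
  next
    fix x y assume "x \<in> Q" "y \<in> Q"
    then obtain Nx Ny where "finite Nx" "finite Ny"
      "\<forall>S. finite S \<longrightarrow> Nx \<subseteq> S \<longrightarrow> inverse_fourier S (fhat star h t x) = x"
      "\<forall>S. finite S \<longrightarrow> Ny \<subseteq> S \<longrightarrow> inverse_fourier S (fhat star h t y) = y"
      unfolding Q_def by blast
    then show "x + y \<in> Q"
      unfolding Q_def
      by (intro CollectI exI[of _ "Nx \<union> Ny"]) (simp add: fhat_add inverse_fourier_add)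
  next
    fix c x assume "x \<in> Q"
    then show "sc c x \<in> Q"
      unfolding Q_def by (simp add: fhat_scale inverse_fourier_scale) blast
  qed
  moreover have "t n a b \<in> Q" if "a \<le> n" "b \<le> n" for n a b
    unfolding Q_def using that
    by (intro CollectI exI[of _ "{n}"]) (simp add: inverse_fourier_fhat_t)
  then have "{t n a b | n a b. a \<le> n \<and> b \<le> n} \<subseteq> Q"
    by blast
  ultimately have "f \<in> Q"
    using span_minimal[of _ Q] in_span_coefficients[of f] by blast
  then show ?thesis
    unfolding Q_def by blast
qed

lemma finite_fsupp: "finite (fsupp star h t f)"
proof -
  obtain N where N: "finite N" "inverse_fourier N (fhat star h t f) = f"
    using fourier_inversion by blast
  have "fsupp star h t f \<subseteq> N"
  proof
    fix n assume "n \<in> fsupp star h t f"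
    then obtain a b where "a \<le> n" "b \<le> n" "fhat star h t f n a b \<noteq> 0"
      unfolding fsupp_def by blast
    then show "n \<in> N"
      using fhat_inverse_fourier[OF N(1), of a n b "fhat star h t f"] N(2) by (auto split: if_splits)
  qed
  then show ?thesis
    using N(1) finite_subset by blast
qed

lemma fourier_eqI:
  assumes "\<And>n a b. a \<le> n \<Longrightarrow> b \<le> n \<Longrightarrow> fhat star h t f n a b = fhat star h t g n a b"
  shows "f = g"
proof -
  obtain Nf where "finite Nf"
    and f: "\<forall>S. finite S \<longrightarrow> Nf \<subseteq> S \<longrightarrow> inverse_fourier S (fhat star h t f) = f"
    using fourier_inversion by blast
  obtain Ng where "finite Ng"
    and g: "\<forall>S. finite S \<longrightarrow> Ng \<subseteq> S \<longrightarrow> inverse_fourier S (fhat star h t g) = g"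
    using fourier_inversion by blast
  have "f = inverse_fourier (Nf \<union> Ng) (fhat star h t f)"
    using f \<open>finite Nf\<close> \<open>finite Ng\<close> by simp
  also have "\<dots> = inverse_fourier (Nf \<union> Ng) (fhat star h t g)"
    using assms by (rule inverse_fourier_cong)
  also have "\<dots> = g"
    using g \<open>finite Nf\<close> \<open>finite Ng\<close> by simp
  finally show ?thesis .
qed

definition scalar_symbol :: "complex symbol \<Rightarrow> 'v symbol \<Rightarrow> bool" where
  "scalar_symbol \<alpha> \<sigma> \<longleftrightarrow> (\<forall>n a b. a \<le> n \<longrightarrow> b \<le> n \<longrightarrow> \<sigma> n a b = sc (\<alpha> n a b) 1)"

lemma homogeneous_zero_entry_scalar:
  assumes "homogeneous sc t 0 \<sigma>" "a \<le> n" "b \<le> n"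
  shows "\<exists>c. \<sigma> n a b = sc c 1"
proof -
  obtain \<psi> :: "nat \<Rightarrow> nat \<Rightarrow> nat \<times> nat" where \<psi>: "\<forall>a\<le>n. \<forall>b\<le>n.
       fst (\<psi> a b) \<le> n \<and> snd (\<psi> a b) \<le> n \<and>
       (\<forall>a' b'. a' \<le> 0 \<longrightarrow> b' \<le> 0 \<longrightarrow> hint 0 a' = hint n (fst (\<psi> a b)) \<longrightarrow>
           hint 0 b' = hint n (snd (\<psi> a b)) \<longrightarrow> \<sigma> n a b \<in> span {t 0 a' b'}) \<and>
       (\<not> (\<exists>a'\<le>0. \<exists>b'\<le>0. hint 0 a' = hint n (fst (\<psi> a b)) \<and> hint 0 b' = hint n (snd (\<psi> a b)))
           \<longrightarrow> \<sigma> n a b = 0)"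
    using assms(1)[unfolded homogeneous_def, THEN spec[of _ n]] ..
  have "hint 0 0 = 0"
    by (simp add: hint_def)
  then have span: "hint n (fst (\<psi> a b)) = 0 \<Longrightarrow> hint n (snd (\<psi> a b)) = 0 \<Longrightarrow> \<sigma> n a b \<in> span {t 0 0 0}"
    and zero: "\<not> (hint n (fst (\<psi> a b)) = 0 \<and> hint n (snd (\<psi> a b)) = 0) \<Longrightarrow> \<sigma> n a b = 0"
    using \<psi> assms(2,3) by simp_all
  show ?thesis
  proof (cases "hint n (fst (\<psi> a b)) = 0 \<and> hint n (snd (\<psi> a b)) = 0")
    case True
    then show ?thesis
      using span by (auto simp: span_singleton t_zero)
  next
    case False
    then show ?thesis
      using zero by (metis scale_zero_left)
  qed
qed

lemma Phi_zero_scalar_symbol: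
  assumes "\<sigma> \<in> Phi sc t 0"
  obtains \<alpha> where "scalar_symbol \<alpha> \<sigma>"
proof -
  obtain K :: nat and c :: "nat \<Rightarrow> complex" and s :: "nat \<Rightarrow> 'v symbol"
    where hom: "\<forall>k<K. homogeneous sc t 0 (s k)"
      and \<sigma>: "\<forall>n a b. a \<le> n \<longrightarrow> b \<le> n \<longrightarrow> \<sigma> n a b = (\<Sum>k<K. sc (c k) (s k n a b))"
    using assms unfolding Phi_def by blast
  define d where "d k n a b = (SOME d. s k n a b = sc d 1)" for k n a b
  have "s k n a b = sc (d k n a b) 1" if "k < K" "a \<le> n" "b \<le> n" for k n a b
  proof -
    have "\<exists>d. s k n a b = sc d 1"
      using hom that(1) by (intro homogeneous_zero_entry_scalar that(2,3)) simp
    then show ?thesis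
      unfolding d_def by (rule someI_ex)
  qed
  then have "scalar_symbol (\<lambda>n a b. \<Sum>k<K. c k * d k n a b) \<sigma>"
    unfolding scalar_symbol_def by (simp add: \<sigma> scale_sum_left)
  then show ?thesis
    by (rule that)
qed

lemma scalar_symbol_sym_mult:
  assumes "scalar_symbol \<alpha> \<sigma>" "scalar_symbol \<beta> \<tau>"
  shows "scalar_symbol (sym_mult \<alpha> \<beta>) (sym_mult \<sigma> \<tau>)"
  using assms unfolding scalar_symbol_def sym_mult_def
  by (simp add: scale_sum_left scale_one_mult)

lemma Top_scalar_symbol:
  assumes "scalar_symbol \<alpha> \<sigma>"
  shows "Top q sc star h t \<sigma> f = inverse_fourier (fsupp star h t f) (sym_mult \<alpha> (fhat star h t f))"
  unfolding Top_def inverse_fourier_def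
proof (rule sum.cong[OF refl])
  fix n
  let ?c = "\<lambda>a. complex_of_real (q powr (- of_int (hint n a)))" and ?F = "fhat star h t f"
  have "(\<Sum>a\<le>n. \<Sum>j\<le>n. \<Sum>k\<le>n. sc (?c a * ?F n j k) (\<sigma> n a j * t n k a))
      = (\<Sum>a\<le>n. \<Sum>j\<le>n. \<Sum>k\<le>n. sc (?c a * ?F n j k * \<alpha> n a j) (t n k a))"
    using assms unfolding scalar_symbol_def by (intro sum.cong refl) (simp add: scale_one_mult)
  also have "\<dots> = (\<Sum>a\<le>n. \<Sum>k\<le>n. \<Sum>j\<le>n. sc (?c a * ?F n j k * \<alpha> n a j) (t n k a))"
    by (intro sum.cong refl sum.swap)
  also have "\<dots> = (\<Sum>a\<le>n. \<Sum>k\<le>n. sc (?c a * sym_mult \<alpha> ?F n a k) (t n k a))"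
    unfolding sym_mult_def by (simp add: scale_sum_left sum_distrib_left mult_ac)
  finally show "sc (complex_of_real (qnum q (real n + 1)))
      (\<Sum>a\<le>n. \<Sum>j\<le>n. \<Sum>k\<le>n. sc (?c a * ?F n j k) (\<sigma> n a j * t n k a)) =
    sc (complex_of_real (qnum q (real n + 1)))
      (\<Sum>a\<le>n. \<Sum>k\<le>n. sc (?c a * sym_mult \<alpha> ?F n a k) (t n k a))"
    by simp
qed

lemma fhat_Top:
  assumes "scalar_symbol \<alpha> \<sigma>" "x \<le> n" "y \<le> n"
  shows "fhat star h t (Top q sc star h t \<sigma> f) n x y = sym_mult \<alpha> (fhat star h t f) n x y"
proof (cases "n \<in> fsupp star h t f")
  case False
  then have "fhat star h t f n j y = 0" if "j \<le> n" for j
    using that assms(3) unfolding fsupp_def by auto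
  then show ?thesis
    using False assms by (simp add: Top_scalar_symbol fhat_inverse_fourier finite_fsupp sym_mult_def)
qed (use assms in \<open>simp add: Top_scalar_symbol fhat_inverse_fourier finite_fsupp\<close>)

end

theorem mainTheorem4:
  fixes q :: real and sc :: "complex \<Rightarrow> 'v::ring_1 \<Rightarrow> 'v" and star :: "'v \<Rightarrow> 'v"
    and h :: "'v \<Rightarrow> complex" and t :: "nat \<Rightarrow> nat \<Rightarrow> nat \<Rightarrow> 'v"
    and \<sigma>A \<sigma>B :: "'v symbol"
  assumes "SUq2_data q sc star h t"
    and "\<sigma>A \<in> Phi sc t 0" and "\<sigma>B \<in> Phi sc t 0"
  shows "Top q sc star h t \<sigma>A \<circ> Top q sc star h t \<sigma>B = Top q sc star h t (sym_mult \<sigma>A \<sigma>B)"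
proof
  interpret SUq2 q sc star h t
    by (rule SUq2.intro) (rule assms(1))
  obtain \<alpha> \<beta> where A: "scalar_symbol \<alpha> \<sigma>A" and B: "scalar_symbol \<beta> \<sigma>B"
    using Phi_zero_scalar_symbol assms(2,3) by metis
  have AB: "scalar_symbol (sym_mult \<alpha> \<beta>) (sym_mult \<sigma>A \<sigma>B)"
    using A B by (rule scalar_symbol_sym_mult)
  fix f
  show "(Top q sc star h t \<sigma>A \<circ> Top q sc star h t \<sigma>B) f = Top q sc star h t (sym_mult \<sigma>A \<sigma>B) f"
  proof (rule fourier_eqI)
    fix n a b :: nat
    assume "a \<le> n" "b \<le> n"
    then have "fhat star h t (Top q sc star h t \<sigma>A (Top q sc star h t \<sigma>B f)) n a b =
        sym_mult \<alpha> (sym_mult \<beta> (fhat star h t f)) n a b"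
      by (simp add: fhat_Top[OF A] fhat_Top[OF B] sym_mult_def)
    also have "\<dots> = fhat star h t (Top q sc star h t (sym_mult \<sigma>A \<sigma>B) f) n a b"
      using \<open>a \<le> n\<close> \<open>b \<le> n\<close> by (simp add: fhat_Top[OF AB] sym_mult_assoc)
    finally show "fhat star h t ((Top q sc star h t \<sigma>A \<circ> Top q sc star h t \<sigma>B) f) n a b =
        fhat star h t (Top q sc star h t (sym_mult \<sigma>A \<sigma>B) f) n a b"
      by simp
  qed
qed

end
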